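(* Let $T\in\mathbb{N}$, and let $X=\{X_t\}_{t=0}^{T}$ be a state process valued in $\mathcal{X}\subseteq\mathbb{R}^d$ with initial state $X_0\in\mathring{\mathcal{X}}_R$, evolving as $X_{t+1}=H\big(K(X_t,a_t),\varepsilon_{t+1}\big)$ for $t=0,\dots,T-1$, where $\{a_t\}_{t=0}^{T-1}$ is an arbitrary $\{\mathcal{F}_t\}$-adapted $\mathbb{R}^p$-valued process. Let the auxiliary process $X^R$ be defined by $X_0^R=X_0$ and $$X_t^R=X_t\,\mathbb{I}_{\{\tau^R>t\}}+\mathcal{Q}\big(X_{\tau^R\wedge t}\big)\,\mathbb{I}_{\{\tau^R\le t\}},\qquad t=1,\dots,T.$$ Then $X^R$ satisfies, for $t=0,1,\dots,T-1$, $$X_{t+1}^R=X_t^R\,\mathbb{I}_{\{X_t^R\in\partial\mathcal{X}_R\}}+\tilde H\big(K(X_t^R,a_t),\varepsilon_{t+1}\big)\,\mathbb{I}_{\{X_t^R\in\mathring{\mathcal{X}}_R\}},$$ where $\tilde H(k,e)=\mathcal{Q}(H(k,e))$ if $H(k,e)\notin\mathring{\mathcal{X}}_R$ and $\tilde H(k,e)=H(k,e)$ otherwise.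
   Context: Time points are $\mathcal{T}=\{0,1,\dots,T\}$ on a probability space $(\Omega,\mathcal{F},\mathbb{P})$ with filtration $\{\mathcal{F}_t\}_{t\in\mathcal{T}}$. $\varepsilon_1,\dots,\varepsilon_T$ are independent $\mathbb{R}^q$-valued random variables ($\varepsilon_{t+1}$ being $\mathcal{F}_{t+1}$-measurable), $K:\mathbb{R}^{d+p}\to\mathbb{R}^r$ and $H:\mathbb{R}^{r+q}\to\mathbb{R}^d$ are measurable. $\mathcal{X}_R\subseteq\mathcal{X}$ is a bounded set (depending on a truncation parameter $R$) with interior $\mathring{\mathcal{X}}_R$ and boundary $\partial\mathcal{X}_R$, whose closure $\mathrm{cl}(\mathcal{X}_R)$ is compact and strictly convex. $\mathcal{Q}(x)=\arg\inf_{y\in\mathrm{cl}(\mathcal{X}_R)}\|y-x\|$ is the Euclidean nearest-point projection onto $\mathrm{cl}(\mathcal{X}_R)$ (unique, and lying in $\partial\mathcal{X}_R$ when $x\notin\mathring{\mathcal{X}}_R$). The stopping time is $\tau^R=\inf\{t\in\mathcal{T}: X_t\notin\mathring{\mathcal{X}}_R\}$, with $\tau^R=\infty$ if $X_t\in\mathring{\mathcal{X}}_R$ for all $t\in\mathcal{T}$. *)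

theory Defs
  imports "HOL-Analysis.Analysis" "HOL-Probability.Probability" "HOL-Library.Extended_Nat"
begin

definition strictly_convex_set :: "'a::real_normed_vector set \<Rightarrow> bool" where
  "strictly_convex_set S \<longleftrightarrow> convex S \<and>
     (\<forall>x\<in>S. \<forall>y\<in>S. x \<noteq> y \<longrightarrow> open_segment x y \<subseteq> interior S)"

text \<open>Euclidean nearest-point projection onto the closure of XR
  (arg inf of the distance; unique under the standing assumptions).\<close>
definition proj :: "'a::euclidean_space set \<Rightarrow> 'a \<Rightarrow> 'a" where
  "proj XR x = (THE y. y \<in> closure XR \<and> (\<forall>z\<in>closure XR. norm (y - x) \<le> norm (z - x)))"

definition tauR :: "nat \<Rightarrow> 'a::euclidean_space set \<Rightarrow> (nat \<Rightarrow> 'w \<Rightarrow> 'a) \<Rightarrow> 'w \<Rightarrow> enat" where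
  "tauR T XR X \<omega> =
     (if \<exists>t\<le>T. X t \<omega> \<notin> interior XR
      then enat (LEAST t. t \<le> T \<and> X t \<omega> \<notin> interior XR) else \<infinity>)"

definition XRproc :: "nat \<Rightarrow> 'a::euclidean_space set \<Rightarrow> (nat \<Rightarrow> 'w \<Rightarrow> 'a) \<Rightarrow> nat \<Rightarrow> 'w \<Rightarrow> 'a" where
  "XRproc T XR X t \<omega> =
     (if t = 0 then X 0 \<omega>
      else indicator {\<omega>'. tauR T XR X \<omega>' > enat t} \<omega> *\<^sub>R X t \<omega>
         + indicator {\<omega>'. tauR T XR X \<omega>' \<le> enat t} \<omega> *\<^sub>R
             proj XR (X (the_enat (min (tauR T XR X \<omega>) (enat t))) \<omega>))"

definition Htilde :: "'a::euclidean_space set \<Rightarrow> ('r \<times> 'q \<Rightarrow> 'a) \<Rightarrow> 'r \<Rightarrow> 'q \<Rightarrow> 'a" where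
  "Htilde XR H k e = (if H (k, e) \<notin> interior XR then proj XR (H (k, e)) else H (k, e))"

end

theory Submission
  imports Defs
begin

text \<open>Before the exit time \<open>\<tau>\<^sup>R\<close> the process \<open>X\<^sup>R\<close> coincides with \<open>X\<close>, and by the dynamics
  it moves by \<open>H\<close>, which agrees with \<open>H tilde\<close> on the interior. At \<open>\<tau>\<^sup>R\<close> it jumps to the
  projection of the first exterior point, which is \<open>H tilde\<close> applied to the previous state.
  The projection of a point outside the interior of a convex set lies on its frontier,
  so from then on \<open>X\<^sup>R\<close> stays frozen on \<open>\<partial>\<X>\<^sub>R\<close>, as the recursion prescribes.\<close>

lemma closest_point_notin_interior:
  fixes S :: "'a::euclidean_space set"
  assumes "closed S" "S \<noteq> {}" "x \<notin> interior S"
  shows "closest_point S x \<notin> interior S"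
proof
  assume int: "closest_point S x \<in> interior S"
  then have "interior S \<noteq> {}" by blast
  then have "affine hull S = UNIV" "rel_interior S = interior S"
    by (simp_all add: affine_hull_nonempty_interior rel_interior_nonempty_interior)
  then show False
    using closest_point_in_rel_interior[OF assms(1,2)] int assms(3) by simp
qed

lemma proj_eq_closest_point:
  fixes S :: "'a::euclidean_space set"
  assumes "convex (closure S)" "S \<noteq> {}"
  shows "proj S x = closest_point (closure S) x"
  unfolding proj_def
proof (rule the_equality)
  have "closure S \<noteq> {}" using assms(2) by simp
  then show "closest_point (closure S) x \<in> closure S \<and>
      (\<forall>z\<in>closure S. norm (closest_point (closure S) x - x) \<le> norm (z - x))"
    using closest_point_exists[of "closure S" x] by (simp add: dist_norm norm_minus_commute)
next
  fix y assume "y \<in> closure S \<and> (\<forall>z\<in>closure S. norm (y - x) \<le> norm (z - x))"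
  then show "y = closest_point (closure S) x"
    using closest_point_unique[of "closure S" y x] assms by (simp add: dist_norm norm_minus_commute)
qed

lemma proj_in_frontier:
  fixes S :: "'a::euclidean_space set"
  assumes "convex (closure S)" "S \<noteq> {}" "x \<notin> interior S"
  shows "proj S x \<in> frontier S"
proof (cases "x \<in> closure S")
  case True
  then show ?thesis
    using assms by (simp add: proj_eq_closest_point closest_point_self frontier_def)
next
  case False
  then have "x \<notin> interior (closure S)" using interior_subset by blast
  then have "closest_point (closure S) x \<notin> interior (closure S)"
    using assms(2) by (simp add: closest_point_notin_interior)
  moreover have "interior S \<subseteq> interior (closure S)" by (simp add: interior_mono closure_subset)
  moreover have "closest_point (closure S) x \<in> closure S"
    using assms(2) by (simp add: closest_point_in_set)
  ultimately show ?thesis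
    using assms by (auto simp: proj_eq_closest_point frontier_def)
qed

lemma tauR_enat_notin_interior:
  assumes "tauR T S X \<omega> = enat m"
  shows "X m \<omega> \<notin> interior S"
proof -
  have ex: "\<exists>t\<le>T. X t \<omega> \<notin> interior S" and m: "m = (LEAST t. t \<le> T \<and> X t \<omega> \<notin> interior S)"
    using assms by (auto simp: tauR_def split: if_splits)
  from LeastI_ex[OF ex[unfolded Bex_def[symmetric]]] show ?thesis
    unfolding m by auto
qed

lemma less_tauR_in_interior:
  assumes "enat s < tauR T S X \<omega>" "s \<le> T"
  shows "X s \<omega> \<in> interior S"
proof (rule ccontr)
  assume "X s \<omega> \<notin> interior S"
  then have "tauR T S X \<omega> \<le> enat s"
    using assms(2) by (auto simp: tauR_def intro: Least_le)
  then show False using assms(1) by simp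
qed

lemma XRproc_before_tauR:
  assumes "t = 0 \<or> enat t < tauR T S X \<omega>"
  shows "XRproc T S X t \<omega> = X t \<omega>"
  using assms by (auto simp: XRproc_def indicator_def)

lemma XRproc_after_tauR:
  assumes "tauR T S X \<omega> = enat m" "m \<le> t" "0 < t"
  shows "XRproc T S X t \<omega> = proj S (X m \<omega>)"
  using assms by (simp add: XRproc_def indicator_def min_def)

lemma XRproc_Suc:
  fixes S :: "'d::euclidean_space set"
  assumes "convex (closure S)" "X 0 \<omega> \<in> interior S" "t < T"
    and step: "X (Suc t) \<omega> = H (K (X t \<omega>, a t \<omega>), e)"
  shows "XRproc T S X (Suc t) \<omega> =
      indicator (frontier S) (XRproc T S X t \<omega>) *\<^sub>R XRproc T S X t \<omega>
    + indicator (interior S) (XRproc T S X t \<omega>) *\<^sub>R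
        Htilde S H (K (XRproc T S X t \<omega>, a t \<omega>)) e"
proof -
  let ?\<tau> = "tauR T S X \<omega>"
  have disj: "frontier S \<inter> interior S = {}" by (auto simp: frontier_def)
  consider "enat (Suc t) < ?\<tau>" | "?\<tau> = enat (Suc t)" | m where "?\<tau> = enat m" "m \<le> t"
  proof (cases ?\<tau>)
    case (enat m)
    then show thesis using that by (cases "m \<le> t"; cases "m = Suc t") auto
  qed (use that in simp)
  then show ?thesis
  proof cases
    case 1
    then have "enat t < ?\<tau>" using enat_ord_simps(2) less_trans lessI by blast
    moreover have "X (Suc t) \<omega> \<in> interior S" using less_tauR_in_interior[OF 1] \<open>t < T\<close> by simp
    moreover have "X t \<omega> \<in> interior S"
      using less_tauR_in_interior[OF \<open>enat t < ?\<tau>\<close>] \<open>t < T\<close> by simp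
    ultimately show ?thesis
      using 1 disj step by (auto simp: XRproc_before_tauR Htilde_def indicator_def)
  next
    case 2
    have "X t \<omega> \<in> interior S" using less_tauR_in_interior[of t T S X \<omega>] 2 \<open>t < T\<close> by simp
    moreover have "X (Suc t) \<omega> \<notin> interior S" using tauR_enat_notin_interior[OF 2] .
    ultimately show ?thesis
      using 2 disj step by (auto simp: XRproc_before_tauR XRproc_after_tauR Htilde_def indicator_def)
  next
    case 3
    have "0 < m" using tauR_enat_notin_interior[OF 3(1)] assms(2) by (cases m) auto
    moreover have "proj S (X m \<omega>) \<in> frontier S"
      using proj_in_frontier[OF assms(1) _ tauR_enat_notin_interior[OF 3(1)]]
        assms(2) interior_subset by blast
    ultimately show ?thesis
      using 3 disj by (auto simp: XRproc_after_tauR indicator_def)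
  qed
qed

theorem proposition1:
  fixes M :: "'w measure" and F :: "nat \<Rightarrow> 'w measure" and T :: nat
    and X :: "nat \<Rightarrow> 'w \<Rightarrow> 'd::euclidean_space"
    and a :: "nat \<Rightarrow> 'w \<Rightarrow> 'p::euclidean_space"
    and eps :: "nat \<Rightarrow> 'w \<Rightarrow> 'q::euclidean_space"
    and K :: "'d \<times> 'p \<Rightarrow> 'r::euclidean_space"
    and H :: "'r \<times> 'q \<Rightarrow> 'd"
    and \<X> XR :: "'d set"
  assumes prob: "prob_space M"
    and filt: "filtration (space M) F"
    and filt_sub: "\<And>t. sets (F t) \<subseteq> sets M"
    and eps_meas: "\<And>t. t < T \<Longrightarrow> eps (Suc t) \<in> borel_measurable (F (Suc t))"
    and eps_indep: "prob_space.indep_vars M (\<lambda>_. borel) eps {1..T}"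
    and K_meas: "K \<in> borel_measurable borel"
    and H_meas: "H \<in> borel_measurable borel"
    and a_adapted: "\<And>t. t < T \<Longrightarrow> a t \<in> borel_measurable (F t)"
    and XR_sub: "XR \<subseteq> \<X>"
    and XR_bdd: "bounded XR"
    and XR_compact: "compact (closure XR)"
    and XR_sconv: "strictly_convex_set (closure XR)"
    and X_val: "\<And>t \<omega>. t \<le> T \<Longrightarrow> \<omega> \<in> space M \<Longrightarrow> X t \<omega> \<in> \<X>"
    and X0: "\<And>\<omega>. \<omega> \<in> space M \<Longrightarrow> X 0 \<omega> \<in> interior XR"
    and dyn: "\<And>t \<omega>. t < T \<Longrightarrow> \<omega> \<in> space M \<Longrightarrow> X (Suc t) \<omega> = H (K (X t \<omega>, a t \<omega>), eps (Suc t) \<omega>)"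
  shows "\<forall>t<T. \<forall>\<omega>\<in>space M.
           XRproc T XR X (Suc t) \<omega> =
             indicator (frontier XR) (XRproc T XR X t \<omega>) *\<^sub>R XRproc T XR X t \<omega>
           + indicator (interior XR) (XRproc T XR X t \<omega>) *\<^sub>R
               Htilde XR H (K (XRproc T XR X t \<omega>, a t \<omega>)) (eps (Suc t) \<omega>)"
proof (intro allI impI ballI)
  fix t \<omega> assume t: "t < T" and \<omega>: "\<omega> \<in> space M"
  have "convex (closure XR)" using XR_sconv by (simp add: strictly_convex_set_def)
  from this X0[OF \<omega>] t dyn[OF t \<omega>] show "XRproc T XR X (Suc t) \<omega> =
      indicator (frontier XR) (XRproc T XR X t \<omega>) *\<^sub>R XRproc T XR X t \<omega>
    + indicator (interior XR) (XRproc T XR X t \<omega>) *\<^sub>R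
        Htilde XR H (K (XRproc T XR X t \<omega>, a t \<omega>)) (eps (Suc t) \<omega>)"
    by (rule XRproc_Suc)
qed

end
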